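(* Let $n\ge2$ and let $Q$ be the $n\times n$ anti-comonotone checkerboard copula, i.e. $Q_{ij}=\frac1n$ if $i+j=n+1$ and $Q_{ij}=0$ otherwise. Then for every $n\times n$ checkerboard copula $P$ there exist nonnegative real numbers $a_{ij}$ ($i,j=1,\dots,n-1$) such that $$P=Q+\sum_{i=1}^{n-1}\sum_{j=1}^{n-1}a_{ij}T^{ij}.$$
   Context: An $n\times n$ checkerboard copula is a real $n\times n$ matrix with nonnegative entries whose row and column sums all equal $\frac1n$. For $i,j\in\{1,\dots,n-1\}$, $T^{ij}=\mathbf{e}_i\mathbf{e}_j^\top+\mathbf{e}_{i+1}\mathbf{e}_{j+1}^\top-\mathbf{e}_i\mathbf{e}_{j+1}^\top-\mathbf{e}_{i+1}\mathbf{e}_j^\top$, where $\mathbf{e}_k$ is the $k$-th standard unit column vector of $\mathbb{R}^n$. *)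

theory Defs
  imports Complex_Main
begin

text \<open>n x n matrices are represented as functions nat => nat => real, with
  1-based indices i, j in {1..n}; entries outside this range are irrelevant.\<close>

definition checkerboard_copula :: "nat \<Rightarrow> (nat \<Rightarrow> nat \<Rightarrow> real) \<Rightarrow> bool" where
  "checkerboard_copula n P \<longleftrightarrow>
     (\<forall>i\<in>{1..n}. \<forall>j\<in>{1..n}. P i j \<ge> 0) \<and>
     (\<forall>i\<in>{1..n}. (\<Sum>j=1..n. P i j) = 1 / real n) \<and>
     (\<forall>j\<in>{1..n}. (\<Sum>i=1..n. P i j) = 1 / real n)"

definition unit_mat :: "nat \<Rightarrow> nat \<Rightarrow> nat \<Rightarrow> nat \<Rightarrow> real" where
  "unit_mat k l = (\<lambda>r c. if r = k \<and> c = l then 1 else 0)"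

definition T_mat :: "nat \<Rightarrow> nat \<Rightarrow> nat \<Rightarrow> nat \<Rightarrow> real" where
  "T_mat i j = (\<lambda>r c. unit_mat i j r c + unit_mat (i+1) (j+1) r c
                     - unit_mat i (j+1) r c - unit_mat (i+1) j r c)"

definition anti_comonotone :: "nat \<Rightarrow> nat \<Rightarrow> nat \<Rightarrow> real" where
  "anti_comonotone n = (\<lambda>i j. if i + j = n + 1 then 1 / real n else 0)"

end

theory Submission
  imports Defs
begin

text \<open>Take as coefficients the rectangle sums a i j = \<Sum>r\<le>i. \<Sum>c\<le>j. (P - Q) r c of the
  difference P - Q. Every matrix is the second difference of its rectangle sums, and
  a T-combination \<Sum> a i j T^ij evaluates at (r, c) to exactly that second difference of a,
  provided a vanishes on the boundary i, j \<in> {0, n}. It does, because P and Q have the same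
  row and column sums. Nonnegativity of a is the Frechet lower bound: the P-mass of the
  rectangle {1..i} \<times> {1..j} is at least max 0 ((i + j - n) / n), which is the Q-mass.\<close>

definition rect_sum :: "(nat \<Rightarrow> nat \<Rightarrow> real) \<Rightarrow> nat \<Rightarrow> nat \<Rightarrow> real" where
  "rect_sum M i j = (\<Sum>r=1..i. \<Sum>c=1..j. M r c)"

lemma rect_sum_0_left [simp]: "rect_sum M 0 j = 0"
  and rect_sum_0_right [simp]: "rect_sum M i 0 = 0"
  by (simp_all add: rect_sum_def)

lemma rect_sum_diff:
  "rect_sum (\<lambda>r c. M r c - N r c) i j = rect_sum M i j - rect_sum N i j"
  by (simp add: rect_sum_def sum_subtractf)

lemma rect_sum_second_difference:
  assumes "r \<ge> 1" "c \<ge> 1"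
  shows "M r c = rect_sum M r c - rect_sum M (r - 1) c - rect_sum M r (c - 1)
                 + rect_sum M (r - 1) (c - 1)"
proof -
  obtain r' c' where "r = Suc r'" "c = Suc c'"
    using assms by (cases r; cases c) auto
  then show ?thesis by (simp add: rect_sum_def sum.distrib)
qed

lemma sum_split_at:
  assumes "j \<le> n"
  shows "(\<Sum>c=1..n. f c) = (\<Sum>c=1..j. f c) + (\<Sum>c=Suc j..n. f c :: 'a :: comm_monoid_add)"
  using sum.ub_add_nat[of 1 j f "n - j"] assms by simp

lemma rect_sum_full_cols:
  assumes "checkerboard_copula n P" "i \<le> n"
  shows "rect_sum P i n = real i / real n"
proof -
  have "rect_sum P i n = (\<Sum>r=1..i. 1 / real n)"
    using assms unfolding rect_sum_def checkerboard_copula_def by (intro sum.cong) auto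
  then show ?thesis by simp
qed

lemma rect_sum_full_rows:
  assumes "checkerboard_copula n P" "j \<le> n"
  shows "rect_sum P n j = real j / real n"
proof -
  have "rect_sum P n j = (\<Sum>c=1..j. \<Sum>r=1..n. P r c)"
    unfolding rect_sum_def by (rule sum.swap)
  also have "\<dots> = (\<Sum>c=1..j. 1 / real n)"
    using assms unfolding checkerboard_copula_def by (intro sum.cong) auto
  finally show ?thesis by simp
qed

lemma sum_anti_comonotone_row:
  assumes "r \<in> {1..n}" "j \<le> n"
  shows "(\<Sum>c=1..j. anti_comonotone n r c) = (if n + 1 - r \<le> j then 1 / real n else 0)"
proof -
  have "(\<Sum>c=1..j. anti_comonotone n r c)
      = (\<Sum>c\<in>{1..j}. if c = n + 1 - r then 1 / real n else 0)"
    using assms by (intro sum.cong) (auto simp: anti_comonotone_def)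
  also have "\<dots> = (if n + 1 - r \<in> {1..j} then 1 / real n else 0)"
    by (simp only: sum.delta[OF finite_atLeastAtMost])
  finally show ?thesis using assms by auto
qed

text \<open>The subtraction i + j - n is truncated, so the right-hand side is max 0 (i + j - n) / n.\<close>

lemma rect_sum_anti_comonotone:
  assumes "i \<le> n" "j \<le> n"
  shows "rect_sum (anti_comonotone n) i j = real (i + j - n) / real n"
proof -
  have "rect_sum (anti_comonotone n) i j
      = (\<Sum>r\<in>{1..i}. if n + 1 - r \<le> j then 1 / real n else 0)"
    unfolding rect_sum_def using assms by (intro sum.cong refl sum_anti_comonotone_row) auto
  also have "\<dots> = (\<Sum>r\<in>{r\<in>{1..i}. n + 1 - r \<le> j}. 1 / real n)"
    by (subst sum.inter_filter) auto
  also have "{r\<in>{1..i}. n + 1 - r \<le> j} = {n + 1 - j..i}"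
    using assms by auto
  also have "(\<Sum>r\<in>{n + 1 - j..i}. 1 / real n) = real (i + j - n) / real n"
    using assms by simp
  finally show ?thesis .
qed

lemma rect_sum_ge_anti_comonotone:
  assumes P: "checkerboard_copula n P" and "i \<le> n" "j \<le> n"
  shows "rect_sum (anti_comonotone n) i j \<le> rect_sum P i j"
proof -
  have nonneg: "\<And>r c. r \<in> {1..n} \<Longrightarrow> c \<in> {1..n} \<Longrightarrow> P r c \<ge> 0"
    using P unfolding checkerboard_copula_def by auto
  have "rect_sum P i j \<ge> 0"
    unfolding rect_sum_def using assms nonneg by (intro sum_nonneg) auto
  have rest: "(\<Sum>r=1..i. \<Sum>c=Suc j..n. P r c) \<le> real (n - j) / real n"
  proof -
    have "(\<Sum>r=1..i. \<Sum>c=Suc j..n. P r c) \<le> (\<Sum>r=1..n. \<Sum>c=Suc j..n. P r c)"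
      using assms nonneg by (intro sum_mono2) (auto intro!: sum_nonneg)
    also have "\<dots> = (\<Sum>c=Suc j..n. \<Sum>r=1..n. P r c)"
      by (rule sum.swap)
    also have "\<dots> = (\<Sum>c=Suc j..n. 1 / real n)"
      using P unfolding checkerboard_copula_def by (intro sum.cong) auto
    finally show ?thesis by simp
  qed
  have "rect_sum P i n = rect_sum P i j + (\<Sum>r=1..i. \<Sum>c=Suc j..n. P r c)"
    by (simp only: rect_sum_def sum_split_at[OF \<open>j \<le> n\<close>] sum.distrib)
  then have "rect_sum P i j \<ge> (real i - real (n - j)) / real n"
    using rest rect_sum_full_cols[OF P \<open>i \<le> n\<close>]
      diff_divide_distrib[of "real i" "real (n - j)" "real n"]
    by linarith
  moreover have "real (i + j - n) = max 0 (real i - real (n - j))"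
    using \<open>j \<le> n\<close> by linarith
  ultimately show ?thesis
    using \<open>rect_sum P i j \<ge> 0\<close> rect_sum_anti_comonotone[OF \<open>i \<le> n\<close> \<open>j \<le> n\<close>]
    by (auto simp: max_def)
qed

lemma sum_sum_delta:
  assumes "finite S" "finite T"
  shows "(\<Sum>i\<in>S. \<Sum>j\<in>T. F i j * (if i = x \<and> j = y then 1 else 0))
       = (if x \<in> S \<and> y \<in> T then F x y else (0 :: 'a :: semiring_1))"
proof -
  have "(\<Sum>i\<in>S. \<Sum>j\<in>T. F i j * (if i = x \<and> j = y then 1 else 0))
      = (\<Sum>i\<in>S. if i = x then (\<Sum>j\<in>T. if j = y then F x j else 0) else 0)"
    by (intro sum.cong) (auto intro!: sum.cong)
  then show ?thesis using assms by (simp add: sum.delta')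
qed

lemma T_mat_as_deltas:
  assumes "r \<ge> 1" "c \<ge> 1"
  shows "T_mat i j r c = (if i = r \<and> j = c then 1 else 0) + (if i = r - 1 \<and> j = c - 1 then 1 else 0)
                       - (if i = r \<and> j = c - 1 then 1 else 0) - (if i = r - 1 \<and> j = c then 1 else 0)"
proof -
  have "(r = i + 1) = (i = r - 1)" "(c = j + 1) = (j = c - 1)"
    using assms by auto
  then show ?thesis
    by (simp add: T_mat_def unit_mat_def eq_commute[of r i] eq_commute[of c j])
qed

lemma sum_T_mat_second_difference:
  assumes boundary: "\<And>k. k \<le> n \<Longrightarrow> F 0 k = 0 \<and> F k 0 = 0 \<and> F n k = 0 \<and> F k n = 0"
    and "r \<in> {1..n}" "c \<in> {1..n}"
  shows "(\<Sum>i=1..n-1. \<Sum>j=1..n-1. F i j * T_mat i j r c)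
       = F r c - F (r - 1) c - F r (c - 1) + F (r - 1) (c - 1)"
proof -
  let ?I = "{1..n-1}"
  have interior: "(if x \<in> ?I \<and> y \<in> ?I then F x y else 0) = F x y" if "x \<le> n" "y \<le> n" for x y
    using that boundary[of x] boundary[of y] by (cases "x = 0 \<or> x = n \<or> y = 0 \<or> y = n") auto
  have "r \<ge> 1" "c \<ge> 1" "r \<le> n" "c \<le> n" "r - 1 \<le> n" "c - 1 \<le> n"
    using assms by auto
  have "(\<Sum>i\<in>?I. \<Sum>j\<in>?I. F i j * T_mat i j r c)
      = (\<Sum>i\<in>?I. \<Sum>j\<in>?I. F i j * (if i = r \<and> j = c then 1 else 0))
      + (\<Sum>i\<in>?I. \<Sum>j\<in>?I. F i j * (if i = r - 1 \<and> j = c - 1 then 1 else 0))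
      - (\<Sum>i\<in>?I. \<Sum>j\<in>?I. F i j * (if i = r \<and> j = c - 1 then 1 else 0))
      - (\<Sum>i\<in>?I. \<Sum>j\<in>?I. F i j * (if i = r - 1 \<and> j = c then 1 else 0))"
    by (simp only: T_mat_as_deltas[OF \<open>r \<ge> 1\<close> \<open>c \<ge> 1\<close>] distrib_left right_diff_distrib
        sum.distrib sum_subtractf)
  also have "\<dots> = F r c + F (r - 1) (c - 1) - F r (c - 1) - F (r - 1) c"
    using \<open>r \<le> n\<close> \<open>c \<le> n\<close> \<open>r - 1 \<le> n\<close> \<open>c - 1 \<le> n\<close>
    by (simp only: sum_sum_delta finite_atLeastAtMost interior)
  finally show ?thesis by simp
qed

theorem lemma9:
  fixes n :: nat and P :: "nat \<Rightarrow> nat \<Rightarrow> real"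
  assumes "n \<ge> 2" and "checkerboard_copula n P"
  shows "\<exists>a :: nat \<Rightarrow> nat \<Rightarrow> real.
           (\<forall>i\<in>{1..n-1}. \<forall>j\<in>{1..n-1}. a i j \<ge> 0) \<and>
           (\<forall>r\<in>{1..n}. \<forall>c\<in>{1..n}.
              P r c = anti_comonotone n r c + (\<Sum>i=1..n-1. \<Sum>j=1..n-1. a i j * T_mat i j r c))"
proof -
  define D where "D = (\<lambda>r c. P r c - anti_comonotone n r c)"
  define a where "a = rect_sum D"
  have a_eq: "a i j = rect_sum P i j - rect_sum (anti_comonotone n) i j" for i j
    by (simp add: a_def D_def rect_sum_diff)
  have boundary: "a 0 k = 0 \<and> a k 0 = 0 \<and> a n k = 0 \<and> a k n = 0" if "k \<le> n" for k
    using that assms(2)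
    by (simp add: a_eq rect_sum_full_rows rect_sum_full_cols rect_sum_anti_comonotone)
  show ?thesis
  proof (intro exI[of _ a] conjI ballI)
    fix i j assume "i \<in> {1..n-1}" "j \<in> {1..n-1}"
    then have "i \<le> n" "j \<le> n" by auto
    then show "a i j \<ge> 0"
      using rect_sum_ge_anti_comonotone[OF assms(2)] by (simp add: a_eq)
  next
    fix r c assume "r \<in> {1..n}" "c \<in> {1..n}"
    then have "D r c = (\<Sum>i=1..n-1. \<Sum>j=1..n-1. a i j * T_mat i j r c)"
      using rect_sum_second_difference[of r c D] sum_T_mat_second_difference[OF boundary]
      by (simp add: a_def)
    then show "P r c = anti_comonotone n r c + (\<Sum>i=1..n-1. \<Sum>j=1..n-1. a i j * T_mat i j r c)"
      by (simp add: D_def)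
  qed
qed

end
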